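(* Let $A$ be a finite set of alternatives with $|A|\ge 3$ and let $\mathbb{D}$ be a domain of linear orders over $A$ that is connected with two distinct neighbours. Then $\mathbb{D}$ is connected and satisfies the disagreement property: for any alternatives $a,b$ such that $r_1(P_i)=a$ and $r_1(P_i')=b$ for some adjacent $P_i,P_i'\in\mathbb{D}$, there exist $\bar P_i,\hat P_i\in\mathbb{D}$ with $r_1(\bar P_i),r_1(\hat P_i)\notin\{a,b\}$, $a\,\bar P_i\,b$ and $b\,\hat P_i\,a$.
   Context: A domain is a set $\mathbb{D}$ of linear orders over $A$; $r_k(P_i)$ denotes the $k$-th ranked alternative of $P_i$, and $x\,P_i\,y$ means $P_i$ ranks $x$ above $y$. Two linear orders $P_i,P_i'$ are adjacent if $P_i'$ is obtained from $P_i$ by swapping two consecutively ranked alternatives, leaving all other ranks unchanged. A path in $\mathbb{D}$ is a sequence of distinct preferences in $\mathbb{D}$ with consecutive ones adjacent; $\mathbb{D}$ is connected if any two of its elements are joined by a path in $\mathbb{D}$. For $\bar{\mathbb{D}}\subseteq\mathbb{D}$, a neighbour of $\bar{\mathbb{D}}$ in $\mathbb{D}$ is a $P_i\in\mathbb{D}\setminus\bar{\mathbb{D}}$ adjacent to some element of $\bar{\mathbb{D}}$. $P_i,P_i'\in\mathbb{D}$ are top-connected if some path in $\mathbb{D}$ from $P_i$ to $P_i'$ has all members with the same top alternative; $\mathbb{D}^{TCC}(P_i)$ is the set of elements of $\mathbb{D}$ top-connected to $P_i$, together with $P_i$. $\mathbb{D}$ is connected with two distinct neighbours if it is connected and for every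 $P_i\in\mathbb{D}$ there exist neighbours $P_i',P_i''$ of $\mathbb{D}^{TCC}(P_i)$ in $\mathbb{D}$ with $r_1(P_i')\ne r_1(P_i'')$. *)

theory Defs
  imports Main
begin

text \<open>A linear order over the finite set A of alternatives is represented by the list
  of alternatives from best to worst: a list without repetitions whose set is A.\<close>

definition linear_order_on_list :: "'a set \<Rightarrow> 'a list \<Rightarrow> bool" where
  "linear_order_on_list A P \<longleftrightarrow> distinct P \<and> set P = A"

definition is_domain :: "'a set \<Rightarrow> 'a list set \<Rightarrow> bool" where
  "is_domain A D \<longleftrightarrow> (\<forall>P\<in>D. linear_order_on_list A P)"

text \<open>k-th ranked alternative, k starting from 1.\<close>
definition rk :: "nat \<Rightarrow> 'a list \<Rightarrow> 'a" where
  "rk k P = P ! (k - 1)"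

definition top_alt :: "'a list \<Rightarrow> 'a" where
  "top_alt P = rk 1 P"

definition ranks_above :: "'a list \<Rightarrow> 'a \<Rightarrow> 'a \<Rightarrow> bool" where
  "ranks_above P x y \<longleftrightarrow> (\<exists>i j. i < j \<and> j < length P \<and> P ! i = x \<and> P ! j = y)"

definition adjacent :: "'a list \<Rightarrow> 'a list \<Rightarrow> bool" where
  "adjacent P P' \<longleftrightarrow> length P' = length P \<and>
     (\<exists>k. Suc k < length P \<and> P' ! k = P ! Suc k \<and> P' ! Suc k = P ! k \<and>
        (\<forall>j<length P. j \<noteq> k \<and> j \<noteq> Suc k \<longrightarrow> P' ! j = P ! j))"

definition is_path :: "'a list set \<Rightarrow> 'a list list \<Rightarrow> bool" where
  "is_path D ps \<longleftrightarrow> ps \<noteq> [] \<and> distinct ps \<and> set ps \<subseteq> D \<and>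
     (\<forall>i. Suc i < length ps \<longrightarrow> adjacent (ps ! i) (ps ! Suc i))"

definition connected_domain :: "'a list set \<Rightarrow> bool" where
  "connected_domain D \<longleftrightarrow>
     (\<forall>P\<in>D. \<forall>P'\<in>D. \<exists>ps. is_path D ps \<and> hd ps = P \<and> last ps = P')"

definition neighbour :: "'a list set \<Rightarrow> 'a list set \<Rightarrow> 'a list \<Rightarrow> bool" where
  "neighbour D Dbar P \<longleftrightarrow> P \<in> D - Dbar \<and> (\<exists>Q\<in>Dbar. adjacent Q P)"

definition top_connected :: "'a list set \<Rightarrow> 'a list \<Rightarrow> 'a list \<Rightarrow> bool" where
  "top_connected D P P' \<longleftrightarrow>
     (\<exists>ps. is_path D ps \<and> hd ps = P \<and> last ps = P' \<and> (\<forall>Q\<in>set ps. top_alt Q = top_alt P))"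

definition TCC :: "'a list set \<Rightarrow> 'a list \<Rightarrow> 'a list set" where
  "TCC D P = {P' \<in> D. top_connected D P P'} \<union> {P}"

definition connected_two_neighbours :: "'a list set \<Rightarrow> bool" where
  "connected_two_neighbours D \<longleftrightarrow> connected_domain D \<and>
     (\<forall>P\<in>D. \<exists>P' P''. neighbour D (TCC D P) P' \<and> neighbour D (TCC D P) P'' \<and>
        top_alt P' \<noteq> top_alt P'')"

definition disagreement_property :: "'a list set \<Rightarrow> bool" where
  "disagreement_property D \<longleftrightarrow>
     (\<forall>a b. a \<noteq> b \<and> (\<exists>P\<in>D. \<exists>P'\<in>D. adjacent P P' \<and> top_alt P = a \<and> top_alt P' = b) \<longrightarrow>
        (\<exists>Pbar\<in>D. \<exists>Phat\<in>D. top_alt Pbar \<notin> {a, b} \<and> top_alt Phat \<notin> {a, b} \<and>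
           ranks_above Pbar a b \<and> ranks_above Phat b a))"

end

theory Submission
  imports Defs
begin

text \<open>Let P have top a and let b \<noteq> a. Of the two neighbours of the top-connected component of P
  with distinct tops, one has a top different from b. Such a neighbour Q is adjacent to a
  preference with top a but does not itself have top a (otherwise it would lie in the component),
  so the swap producing Q is that of the first two ranks: a is ranked second in Q, hence above b.
  Applying this to preferences with tops a and b gives the disagreement property; connectedness is part of the hypothesis.\<close>

lemma is_path_extend:
  assumes ps: "is_path D ps" and Q: "Q \<in> D" "adjacent (last ps) Q"
  shows "\<exists>qs. is_path D qs \<and> hd qs = hd ps \<and> last qs = Q \<and> set qs \<subseteq> insert Q (set ps)"
proof -
  have ne: "ps \<noteq> []" using ps by (simp add: is_path_def)
  show ?thesis
  proof (cases "Q \<in> set ps")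
    case True
    then obtain i where i: "i < length ps" "ps ! i = Q" by (auto simp: in_set_conv_nth)
    let ?qs = "take (Suc i) ps"
    have "is_path D ?qs" using ps i unfolding is_path_def by (auto dest: in_set_takeD)
    moreover have "hd ?qs = hd ps" using ne by (simp add: hd_take)
    moreover have "last ?qs = Q" using i by (simp add: take_Suc_conv_app_nth)
    moreover have "set ?qs \<subseteq> insert Q (set ps)" by (auto dest: in_set_takeD)
    ultimately show ?thesis by blast
  next
    case False
    let ?qs = "ps @ [Q]"
    have "adjacent (?qs ! j) (?qs ! Suc j)" if "Suc j < length ?qs" for j
    proof (cases "Suc j < length ps")
      case True
      then show ?thesis using ps by (simp add: is_path_def nth_append)
    next
      case False
      then have "j = length ps - 1" "Suc j = length ps" using that by auto
      then show ?thesis using Q(2) ne by (simp add: nth_append last_conv_nth)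
    qed
    then have "is_path D ?qs" using ps False Q(1) by (auto simp: is_path_def)
    then show ?thesis using ne by auto
  qed
qed

lemma top_alt_TCC:
  assumes "R \<in> TCC D P"
  shows "top_alt R = top_alt P"
proof (cases "R = P")
  case False
  then obtain ps where "is_path D ps" "last ps = R" "\<forall>Q\<in>set ps. top_alt Q = top_alt P"
    using assms by (auto simp: TCC_def top_connected_def)
  then show ?thesis by (auto simp: is_path_def)
qed simp

lemma TCC_adjacent_closed:
  assumes P: "P \<in> D" and R: "R \<in> TCC D P"
    and Q: "Q \<in> D" "adjacent R Q" "top_alt Q = top_alt P"
  shows "Q \<in> TCC D P"
proof -
  obtain ps where ps: "is_path D ps" "hd ps = P" "last ps = R" "\<forall>X\<in>set ps. top_alt X = top_alt P"
  proof (cases "R = P")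
    case True
    then show ?thesis using that[of "[P]"] P by (simp add: is_path_def)
  next
    case False
    then show ?thesis using that R by (auto simp: TCC_def top_connected_def)
  qed
  obtain qs where "is_path D qs" "hd qs = P" "last qs = Q" "set qs \<subseteq> insert Q (set ps)"
    using is_path_extend[OF ps(1) Q(1)] Q(2) ps(2,3) by auto
  then have "top_connected D P Q" using ps(4) Q(3) by (auto simp: top_connected_def)
  then show ?thesis using Q(1) by (simp add: TCC_def)
qed

lemma neighbour_TCC_top_alt:
  assumes "P \<in> D" "neighbour D (TCC D P) Q"
  obtains R where "adjacent R Q" "Q \<in> D" "top_alt R = top_alt P" "top_alt Q \<noteq> top_alt P"
proof -
  obtain R where R: "R \<in> TCC D P" "adjacent R Q" "Q \<in> D" "Q \<notin> TCC D P"
    using assms(2) by (auto simp: neighbour_def)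
  then have "top_alt Q \<noteq> top_alt P" using TCC_adjacent_closed[OF assms(1)] by blast
  then show ?thesis using that R top_alt_TCC[OF R(1)] by blast
qed

text \<open>Only the swap of the first two ranks changes the top.\<close>

lemma adjacent_top_alt_change:
  assumes "adjacent R Q" "top_alt R \<noteq> top_alt Q"
  shows "Q ! 1 = top_alt R"
proof -
  obtain k where k: "Suc k < length R" "Q ! Suc k = R ! k"
    "\<forall>j<length R. j \<noteq> k \<and> j \<noteq> Suc k \<longrightarrow> Q ! j = R ! j"
    using assms(1) by (auto simp: adjacent_def)
  have "k = 0"
  proof (rule ccontr)
    assume "k \<noteq> 0"
    then have "Q ! 0 = R ! 0" using k(1) k(3)[rule_format, of 0] by fastforce
    then show False using assms(2) by (simp add: top_alt_def rk_def)
  qed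
  then show ?thesis using k(2) by (simp add: top_alt_def rk_def)
qed

lemma ranks_above_if_second:
  assumes "Q ! 1 = a" "b \<in> set Q" "b \<noteq> top_alt Q" "b \<noteq> a"
  shows "ranks_above Q a b"
proof -
  obtain j where j: "j < length Q" "Q ! j = b" using assms(2) by (auto simp: in_set_conv_nth)
  have "j \<noteq> 0" using j(2) assms(3) by (metis top_alt_def rk_def diff_self_eq_0)
  moreover have "j \<noteq> 1" using j(2) assms(1,4) by blast
  ultimately have "1 < j" by simp
  then show ?thesis unfolding ranks_above_def using j assms(1) by blast
qed

lemma top_alt_mem:
  assumes "linear_order_on_list A P" "A \<noteq> {}"
  shows "top_alt P \<in> A"
  using assms by (cases P) (auto simp: linear_order_on_list_def top_alt_def rk_def)

lemma neighbour_ranks_above: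
  assumes dom: "is_domain A D" and P: "P \<in> D"
    and nQ: "neighbour D (TCC D P) Q" and b: "b \<in> A" "b \<noteq> top_alt P" "b \<noteq> top_alt Q"
  shows "Q \<in> D \<and> top_alt Q \<notin> {top_alt P, b} \<and> ranks_above Q (top_alt P) b"
proof -
  obtain R where R: "adjacent R Q" "Q \<in> D" "top_alt R = top_alt P" "top_alt Q \<noteq> top_alt P"
    using neighbour_TCC_top_alt[OF P nQ] by blast
  have "Q ! 1 = top_alt P" using adjacent_top_alt_change[OF R(1)] R(3,4) by simp
  moreover have "b \<in> set Q" using dom R(2) b(1) by (auto simp: is_domain_def linear_order_on_list_def)
  ultimately show ?thesis using ranks_above_if_second R(2,4) b(2,3) by auto
qed

lemma two_neighbours_ranks_above:
  assumes dom: "is_domain A D" and c2: "connected_two_neighbours D"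
    and P: "P \<in> D" and b: "b \<in> A" "b \<noteq> top_alt P"
  shows "\<exists>Q\<in>D. top_alt Q \<notin> {top_alt P, b} \<and> ranks_above Q (top_alt P) b"
proof -
  obtain Q1 Q2 where "neighbour D (TCC D P) Q1" "neighbour D (TCC D P) Q2"
    "top_alt Q1 \<noteq> top_alt Q2"
    using c2 P by (auto simp: connected_two_neighbours_def)
  then obtain Q where "neighbour D (TCC D P) Q" "b \<noteq> top_alt Q" by metis
  then show ?thesis using neighbour_ranks_above[OF dom P _ b] by blast
qed

theorem mainTheorem6:
  fixes A :: "'a set" and D :: "'a list set"
  assumes "finite A" and "card A \<ge> 3"
    and "is_domain A D"
    and "connected_two_neighbours D"
  shows "connected_domain D \<and> disagreement_property D"
proof -
  have "A \<noteq> {}" using assms(2) by auto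
  then have top_mem: "top_alt P \<in> A" if "P \<in> D" for P
    using assms(3) that top_alt_mem by (auto simp: is_domain_def)
  have "disagreement_property D"
    unfolding disagreement_property_def
  proof (intro allI impI)
    fix a b
    assume "a \<noteq> b \<and> (\<exists>P\<in>D. \<exists>P'\<in>D. adjacent P P' \<and> top_alt P = a \<and> top_alt P' = b)"
    then obtain P P' where "a \<noteq> b" "P \<in> D" "P' \<in> D" "top_alt P = a" "top_alt P' = b" by blast
    then have "a \<in> A" "b \<in> A" using top_mem by auto
    obtain Pbar where "Pbar \<in> D" "top_alt Pbar \<notin> {a, b}" "ranks_above Pbar a b"
      using two_neighbours_ranks_above[OF assms(3,4) \<open>P \<in> D\<close> \<open>b \<in> A\<close>] \<open>a \<noteq> b\<close>
        \<open>top_alt P = a\<close> by auto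
    moreover obtain Phat where "Phat \<in> D" "top_alt Phat \<notin> {a, b}" "ranks_above Phat b a"
      using two_neighbours_ranks_above[OF assms(3,4) \<open>P' \<in> D\<close> \<open>a \<in> A\<close>] \<open>a \<noteq> b\<close>
        \<open>top_alt P' = b\<close> by auto
    ultimately show "\<exists>Pbar\<in>D. \<exists>Phat\<in>D. top_alt Pbar \<notin> {a, b} \<and> top_alt Phat \<notin> {a, b} \<and>
           ranks_above Pbar a b \<and> ranks_above Phat b a"
      by blast
  qed
  then show ?thesis using assms(4) by (simp add: connected_two_neighbours_def)
qed

end
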